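(* Let $mG$ be a finite canonical misinformation game, $\Gamma=(\mathcal{AD}^*(\{mG\}),E)$ its adaptation graph, $\Gamma'$ its loopless version, and let $K=\{mG'\in\mathcal{AD}^*(\{mG\}): d^+_{\Gamma'}(mG')=0\}$ be the set of sink nodes of $\Gamma'$. Then $K\subseteq\mathcal{T}$, where $\mathcal{T}$ is the terminal set of the Adaptation Procedure on $mG$. Moreover, every natural misinformed equilibrium of any $mG'\in K$ is a stable misinformed equilibrium of $mG$.
   Context: A normal-form game is $G=\langle N,S,P\rangle$ with finite players $N$, finite pure strategy sets $S_i$, positions $S=\times_i S_i$, payoffs $P_i:S\to\mathbb{R}$. A misinformation game $mG=\langle G^0,G^1,\dots,G^{|N|}\rangle$ consists of the actual game $G^0$ and subjective games $G^i$; it is canonical if all $G^i=\langle N,S,P^i\rangle$ differ from $G^0$ only in payoffs and in every $G^i$ all players have equally many pure strategies. $NME(mG)$ (natural misinformed equilibria) is the set of profiles $\sigma=(\sigma_1,\dots,\sigma_{|N|})$ such that each $\sigma_i$ is player $i$'s component of some Nash equilibrium of $G^i$. $\chi(\sigma)=\mathrm{supp}(\sigma_1)\times\dots\times\mathrm{supp}(\sigma_{|N|})$. For $\vec v\in S$, $mG_{\vec v}$ is obtained by replacing, in every $P^i$ ($i\ge1$), the payoff vector at position $\vec v$ by $P^0(\vec v)$. For a set $M$ of misinformation games, $\mathcal{AD}(M)=\{mG_{\vec u}: mG\in M,\sigma\in NME(mG),\vec u\in\chi(\sigma)\}$, $\mathcal{AD}^{(0)}(M)=M$, $\mathcal{AD}^{(t+1)}(M)=\mathcal{AD}^{(t)}(\mathcal{AD}(M))$,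 $\mathcal{AD}^*(M)=\bigcup_{t\ge0}\mathcal{AD}^{(t)}(M)$; the length $\mathfrak{L}$ is the least $t\ge0$ with $\mathcal{AD}^{(t+1)}(M)=\mathcal{AD}^{(t)}(M)$ and $\mathcal{AD}^\infty(M)=\mathcal{AD}^{(\mathfrak{L})}(M)$. The terminal set is $\mathcal{T}=\{mG'\in\mathcal{AD}^*(\{mG\}): mG'\in\mathcal{AD}(\{mG'\})\}$. A profile $\sigma$ is a stable misinformed equilibrium of $mG$ if there is $\widehat{mG}\in\mathcal{AD}^\infty(\{mG\})$ with $\sigma\in NME(\widehat{mG})$ and $\widehat{mG}_{\vec v}=\widehat{mG}$ for all $\vec v\in\chi(\sigma)$. The adaptation graph $\Gamma$ has vertex set $\mathcal{AD}^*(\{mG\})$ and an edge $(mG^1,mG^2)$ iff $mG^2=(mG^1)_{\vec v}$ for some $\sigma\in NME(mG^1)$, $\vec v\in\chi(\sigma)$; $\Gamma'$ is $\Gamma$ with self-loops removed; $d^+_{\Gamma'}$ denotes out-degree in $\Gamma'$. *)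

theory Defs
  imports Complex_Main "HOL-Library.FuncSet"
begin

text \<open>
  A finite canonical misinformation game with n players (players 0..<n) where
  player i has the pure strategies {0..<s i}.  All component games share the
  player set and the strategy sets (canonical), so a misinformation game is
  represented by its payoff functions: mG k v j is the payoff of player j at
  position v in game G^k, for k = 0 (actual game) and k = 1..n (subjective
  game of player k-1, i.e. players are numbered from 0).
\<close>

type_synonym mgame = "nat \<Rightarrow> (nat \<Rightarrow> nat) \<Rightarrow> nat \<Rightarrow> real"

definition positions :: "nat \<Rightarrow> (nat \<Rightarrow> nat) \<Rightarrow> (nat \<Rightarrow> nat) set" where
  "positions n s = PiE {..<n} (\<lambda>i. {..<s i})"

definition mixed_strategy :: "nat \<Rightarrow> (nat \<Rightarrow> real) \<Rightarrow> bool" where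
  "mixed_strategy m p \<longleftrightarrow> (\<forall>a. 0 \<le> p a) \<and> (\<forall>a. m \<le> a \<longrightarrow> p a = 0) \<and> (\<Sum>a<m. p a) = 1"

definition profile :: "nat \<Rightarrow> (nat \<Rightarrow> nat) \<Rightarrow> (nat \<Rightarrow> nat \<Rightarrow> real) \<Rightarrow> bool" where
  "profile n s \<sigma> \<longleftrightarrow> (\<forall>i<n. mixed_strategy (s i) (\<sigma> i)) \<and> (\<forall>i. n \<le> i \<longrightarrow> \<sigma> i = (\<lambda>_. 0))"

definition exp_payoff :: "nat \<Rightarrow> (nat \<Rightarrow> nat) \<Rightarrow> ((nat \<Rightarrow> nat) \<Rightarrow> nat \<Rightarrow> real)
    \<Rightarrow> (nat \<Rightarrow> nat \<Rightarrow> real) \<Rightarrow> nat \<Rightarrow> real" where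
  "exp_payoff n s P \<sigma> j = (\<Sum>v\<in>positions n s. (\<Prod>i<n. \<sigma> i (v i)) * P v j)"

definition nash :: "nat \<Rightarrow> (nat \<Rightarrow> nat) \<Rightarrow> ((nat \<Rightarrow> nat) \<Rightarrow> nat \<Rightarrow> real)
    \<Rightarrow> (nat \<Rightarrow> nat \<Rightarrow> real) \<Rightarrow> bool" where
  "nash n s P \<sigma> \<longleftrightarrow> profile n s \<sigma> \<and>
     (\<forall>i<n. \<forall>\<tau>. mixed_strategy (s i) \<tau> \<longrightarrow>
        exp_payoff n s P (\<sigma>(i := \<tau>)) i \<le> exp_payoff n s P \<sigma> i)"

definition NME :: "nat \<Rightarrow> (nat \<Rightarrow> nat) \<Rightarrow> mgame \<Rightarrow> (nat \<Rightarrow> nat \<Rightarrow> real) set" where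
  "NME n s mG = {\<sigma>. profile n s \<sigma> \<and>
     (\<forall>i<n. \<exists>\<tau>. nash n s (mG (Suc i)) \<tau> \<and> \<sigma> i = \<tau> i)}"

definition supp :: "nat \<Rightarrow> (nat \<Rightarrow> real) \<Rightarrow> nat set" where
  "supp m p = {a. a < m \<and> p a \<noteq> 0}"

definition chi :: "nat \<Rightarrow> (nat \<Rightarrow> nat) \<Rightarrow> (nat \<Rightarrow> nat \<Rightarrow> real) \<Rightarrow> (nat \<Rightarrow> nat) set" where
  "chi n s \<sigma> = PiE {..<n} (\<lambda>i. supp (s i) (\<sigma> i))"

definition upd :: "nat \<Rightarrow> mgame \<Rightarrow> (nat \<Rightarrow> nat) \<Rightarrow> mgame" where
  "upd n mG v = (\<lambda>k w j. if 1 \<le> k \<and> k \<le> n \<and> w = v then mG 0 v j else mG k w j)"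

definition AD :: "nat \<Rightarrow> (nat \<Rightarrow> nat) \<Rightarrow> mgame set \<Rightarrow> mgame set" where
  "AD n s M = {upd n g u | g \<sigma> u. g \<in> M \<and> \<sigma> \<in> NME n s g \<and> u \<in> chi n s \<sigma>}"

fun ADn :: "nat \<Rightarrow> (nat \<Rightarrow> nat) \<Rightarrow> nat \<Rightarrow> mgame set \<Rightarrow> mgame set" where
  "ADn n s 0 M = M"
| "ADn n s (Suc t) M = ADn n s t (AD n s M)"

definition ADstar :: "nat \<Rightarrow> (nat \<Rightarrow> nat) \<Rightarrow> mgame set \<Rightarrow> mgame set" where
  "ADstar n s M = (\<Union>t. ADn n s t M)"

definition ADlength :: "nat \<Rightarrow> (nat \<Rightarrow> nat) \<Rightarrow> mgame set \<Rightarrow> nat" where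
  "ADlength n s M = (LEAST t. ADn n s (Suc t) M = ADn n s t M)"

definition ADinf :: "nat \<Rightarrow> (nat \<Rightarrow> nat) \<Rightarrow> mgame set \<Rightarrow> mgame set" where
  "ADinf n s M = ADn n s (ADlength n s M) M"

definition terminal_set :: "nat \<Rightarrow> (nat \<Rightarrow> nat) \<Rightarrow> mgame \<Rightarrow> mgame set" where
  "terminal_set n s mG = {g \<in> ADstar n s {mG}. g \<in> AD n s {g}}"

definition stable_eq :: "nat \<Rightarrow> (nat \<Rightarrow> nat) \<Rightarrow> mgame \<Rightarrow> (nat \<Rightarrow> nat \<Rightarrow> real) \<Rightarrow> bool" where
  "stable_eq n s mG \<sigma> \<longleftrightarrow> (\<exists>g\<in>ADinf n s {mG}. \<sigma> \<in> NME n s g \<and> (\<forall>v\<in>chi n s \<sigma>. upd n g v = g))"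

text \<open>Adaptation graph: vertices ADstar {mG}, edges (g1,g2) iff g2 = (g1)_v for
  some \<sigma> \<in> NME g1 and v \<in> chi \<sigma>.\<close>
definition adapt_edge :: "nat \<Rightarrow> (nat \<Rightarrow> nat) \<Rightarrow> mgame \<Rightarrow> mgame \<Rightarrow> bool" where
  "adapt_edge n s g1 g2 \<longleftrightarrow> (\<exists>\<sigma> v. \<sigma> \<in> NME n s g1 \<and> v \<in> chi n s \<sigma> \<and> g2 = upd n g1 v)"

definition out_nbrs' :: "nat \<Rightarrow> (nat \<Rightarrow> nat) \<Rightarrow> mgame \<Rightarrow> mgame \<Rightarrow> mgame set" where
  "out_nbrs' n s mG g = {g2 \<in> ADstar n s {mG}. adapt_edge n s g g2 \<and> g2 \<noteq> g}"

definition out_degree' :: "nat \<Rightarrow> (nat \<Rightarrow> nat) \<Rightarrow> mgame \<Rightarrow> mgame \<Rightarrow> nat" where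
  "out_degree' n s mG g = card (out_nbrs' n s mG g)"

definition sinks :: "nat \<Rightarrow> (nat \<Rightarrow> nat) \<Rightarrow> mgame \<Rightarrow> mgame set" where
  "sinks n s mG = {g \<in> ADstar n s {mG}. out_degree' n s mG g = 0}"

end

theory Submission
  imports Defs "HOL-Analysis.Analysis"
begin

text \<open>
  A sink of the loopless adaptation graph is a game all of whose adaptations are trivial:
  updating it at any position in the support of one of its natural misinformed equilibria
  gives back the same game.  Such a game therefore adapts to itself and is terminal,
  provided it has a natural misinformed equilibrium at all; this needs Nash equilibria of
  the subjective games, which we obtain as fixed points of Nash's map, using Brouwer's
  theorem for a cube (proved from Kuhn's labelling lemma).  A game that adapts to itself
  stays in every later stage of the procedure, and the stages become stationary after more
  than |S| steps, since every non-trivial adaptation step fixes one more position.  So every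
  sink lies in the limit stage, and its equilibria are stable.
\<close>

section \<open>Brouwer's theorem for a cube of functions\<close>

definition cube :: "nat \<Rightarrow> (nat \<Rightarrow> real) set" where
  "cube N = {x. (\<forall>i<N. 0 \<le> x i \<and> x i \<le> 1) \<and> (\<forall>i\<ge>N. x i = 0)}"

lemma tendsto_fun_iff_coordinates:
  fixes X :: "'a \<Rightarrow> 'b \<Rightarrow> 'c::topological_space"
  shows "(X \<longlongrightarrow> l) F \<longleftrightarrow> (\<forall>i. ((\<lambda>k. X k i) \<longlongrightarrow> l i) F)"
  using limitin_componentwise[of "\<lambda>i. euclidean" UNIV X l F]
  by (simp add: euclidean_product_topology)

lemma compact_cube: "compact (cube N)"
proof -
  have "cube N = PiE UNIV (\<lambda>i. if i < N then {0..1} else {0})"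
    unfolding cube_def by (auto simp: PiE_iff) (metis atLeastAtMost_iff not_less singletonD)+
  moreover have "compactin euclidean (PiE UNIV (\<lambda>i. if i < N then {0..1::real} else {0}))"
    unfolding euclidean_product_topology[symmetric] compactin_PiE by simp
  ultimately show ?thesis by simp
qed

lemma closed_cube_le:
  assumes "continuous_on (cube N) g" "continuous_on (cube N) h"
  shows "closed {x \<in> cube N. g x \<le> (h x :: real)}"
proof -
  have "{x \<in> cube N. g x \<le> h x} = cube N \<inter> (\<lambda>x. h x - g x) -` {0..}"
    by auto
  then show ?thesis
    using compact_cube compact_imp_closed assms
    by (metis closed_atLeast continuous_closed_preimage continuous_on_diff)
qed

lemma limit_in_closed_if_near:
  fixes Z :: "nat \<Rightarrow> nat \<Rightarrow> real"
  assumes A: "closed A" and lim: "(Z \<circ> \<phi>) \<longlonglongrightarrow> l" and \<phi>: "strict_mono \<phi>"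
    and near: "\<And>k. \<exists>a\<in>A. \<forall>j. \<bar>a j - Z k j\<bar> \<le> 1 / real (Suc k)"
  shows "l \<in> A"
proof -
  obtain a where a: "\<And>k. a k \<in> A" "\<And>k j. \<bar>a k j - Z k j\<bar> \<le> 1 / real (Suc k)"
    using near by metis
  have "(a \<circ> \<phi>) \<longlonglongrightarrow> l"
    unfolding tendsto_fun_iff_coordinates
  proof
    fix j
    have "(\<lambda>k. a (\<phi> k) j - Z (\<phi> k) j) \<longlonglongrightarrow> 0"
    proof (rule Lim_null_comparison)
      have "\<bar>a (\<phi> k) j - Z (\<phi> k) j\<bar> \<le> 1 / real (Suc k)" for k
      proof -
        have "1 / real (Suc (\<phi> k)) \<le> 1 / real (Suc k)"
          using seq_suble[OF \<phi>, of k] by (simp add: frac_le)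
        then show ?thesis
          using a(2)[of "\<phi> k" j] by linarith
      qed
      then show "\<forall>\<^sub>F k in sequentially. norm (a (\<phi> k) j - Z (\<phi> k) j) \<le> 1 / real (Suc k)"
        by simp
      show "(\<lambda>k. 1 / real (Suc k)) \<longlonglongrightarrow> 0"
        using LIMSEQ_inverse_real_of_nat by (simp add: inverse_eq_divide)
    qed
    moreover have "(\<lambda>k. Z (\<phi> k) j) \<longlonglongrightarrow> l j"
      using lim unfolding tendsto_fun_iff_coordinates by (simp add: o_def)
    ultimately have "(\<lambda>k. Z (\<phi> k) j + (a (\<phi> k) j - Z (\<phi> k) j)) \<longlonglongrightarrow> l j + 0"
      by (intro tendsto_add)
    then show "(\<lambda>k. (a \<circ> \<phi>) k j) \<longlonglongrightarrow> l j"
      by simp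
  qed
  then show ?thesis
    using closed_sequentially[OF A, of "a \<circ> \<phi>"] a(1) by simp
qed

lemma cube_labelling:
  fixes f :: "(nat \<Rightarrow> real) \<Rightarrow> nat \<Rightarrow> real"
  assumes "f ` cube N \<subseteq> cube N"
  obtains l :: "(nat \<Rightarrow> real) \<Rightarrow> nat \<Rightarrow> nat" where
    "\<And>x i. l x i \<le> 1"
    "\<And>x i. x \<in> cube N \<Longrightarrow> i < N \<Longrightarrow> x i = 0 \<Longrightarrow> l x i = 0"
    "\<And>x i. x \<in> cube N \<Longrightarrow> i < N \<Longrightarrow> x i = 1 \<Longrightarrow> l x i = 1"
    "\<And>x i. x \<in> cube N \<Longrightarrow> i < N \<Longrightarrow> l x i = 0 \<Longrightarrow> x i \<le> f x i"
    "\<And>x i. x \<in> cube N \<Longrightarrow> i < N \<Longrightarrow> l x i = 1 \<Longrightarrow> f x i \<le> x i"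
proof -
  have "\<exists>l. (\<forall>x i. l x i \<le> (1::nat)) \<and>
      (\<forall>x i. x \<in> cube N \<and> i < N \<and> x i = 0 \<longrightarrow> l x i = 0) \<and>
      (\<forall>x i. x \<in> cube N \<and> i < N \<and> x i = 1 \<longrightarrow> l x i = 1) \<and>
      (\<forall>x i. x \<in> cube N \<and> i < N \<and> l x i = 0 \<longrightarrow> x i \<le> f x i) \<and>
      (\<forall>x i. x \<in> cube N \<and> i < N \<and> l x i = 1 \<longrightarrow> f x i \<le> x i)"
    by (rule kuhn_labelling_lemma') (use assms in \<open>auto simp: cube_def\<close>)
  then show ?thesis
    using that by blast
qed

definition grid_point :: "nat \<Rightarrow> nat \<Rightarrow> (nat \<Rightarrow> nat) \<Rightarrow> nat \<Rightarrow> real" where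
  "grid_point N p x = (\<lambda>j. if j < N then real (x j) / real p else 0)"

lemma grid_point_in_cube: "0 < p \<Longrightarrow> \<forall>j<N. x j \<le> p \<Longrightarrow> grid_point N p x \<in> cube N"
  by (auto simp: cube_def grid_point_def)

lemma grid_point_near:
  assumes "\<forall>j<N. q j \<le> x j \<and> x j \<le> q j + 1"
  shows "\<bar>grid_point N p x j - grid_point N p q j\<bar> \<le> 1 / real p"
proof (cases "j < N")
  case True
  then have "\<bar>real (x j) - real (q j)\<bar> / real p \<le> 1 / real p"
    using assms by (intro divide_right_mono) auto
  with True show ?thesis
    by (simp add: grid_point_def diff_divide_distrib[symmetric])
qed (simp add: grid_point_def)

lemma cube_approx_fixpoint:
  fixes f :: "(nat \<Rightarrow> real) \<Rightarrow> nat \<Rightarrow> real"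
  assumes maps: "f ` cube N \<subseteq> cube N" and p: "0 < p"
  shows "\<exists>z\<in>cube N. \<forall>i<N.
     (\<exists>a\<in>cube N. (\<forall>j. \<bar>a j - z j\<bar> \<le> 1 / real p) \<and> a i \<le> f a i) \<and>
     (\<exists>b\<in>cube N. (\<forall>j. \<bar>b j - z j\<bar> \<le> 1 / real p) \<and> f b i \<le> b i)"
proof -
  obtain l :: "(nat \<Rightarrow> real) \<Rightarrow> nat \<Rightarrow> nat" where l: "\<And>x i. l x i \<le> 1"
    "\<And>x i. x \<in> cube N \<Longrightarrow> i < N \<Longrightarrow> x i = 0 \<Longrightarrow> l x i = 0"
    "\<And>x i. x \<in> cube N \<Longrightarrow> i < N \<Longrightarrow> x i = 1 \<Longrightarrow> l x i = 1"
    "\<And>x i. x \<in> cube N \<Longrightarrow> i < N \<Longrightarrow> l x i = 0 \<Longrightarrow> x i \<le> f x i"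
    "\<And>x i. x \<in> cube N \<Longrightarrow> i < N \<Longrightarrow> l x i = 1 \<Longrightarrow> f x i \<le> x i"
    using cube_labelling[OF maps] by blast
  let ?pt = "grid_point N p"
  define label where "label x = l (?pt x)" for x
  obtain q where q: "\<forall>i<N. q i < p"
    and q_cell: "\<forall>i<N. \<exists>r s. (\<forall>j<N. q j \<le> r j \<and> r j \<le> q j + 1)
      \<and> (\<forall>j<N. q j \<le> s j \<and> s j \<le> q j + 1) \<and> label r i \<noteq> label s i"
  proof (rule kuhn_lemma[OF p])
    show "\<forall>x. (\<forall>i<N. x i \<le> p) \<longrightarrow> (\<forall>i<N. label x i = 0 \<or> label x i = 1)"
      using l(1) by (simp add: label_def le_Suc_eq)
    show "\<forall>x. (\<forall>i<N. x i \<le> p) \<longrightarrow> (\<forall>i<N. x i = 0 \<longrightarrow> label x i = 0)"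
      using l(2) grid_point_in_cube[OF p] by (simp add: label_def grid_point_def)
    show "\<forall>x. (\<forall>i<N. x i \<le> p) \<longrightarrow> (\<forall>i<N. x i = p \<longrightarrow> label x i = 1)"
      using l(3) grid_point_in_cube[OF p] p by (simp add: label_def grid_point_def)
  qed
  have cell: "?pt x \<in> cube N \<and> (\<forall>j. \<bar>?pt x j - ?pt q j\<bar> \<le> 1 / real p)"
    if x: "\<forall>j<N. q j \<le> x j \<and> x j \<le> q j + 1" for x
  proof
    have "x j \<le> p" if "j < N" for j
      using x q that by (metis Suc_eq_plus1 Suc_leI le_trans)
    then show "?pt x \<in> cube N"
      by (intro grid_point_in_cube[OF p]) blast
    show "\<forall>j. \<bar>?pt x j - ?pt q j\<bar> \<le> 1 / real p"
      using grid_point_near[OF x] by blast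
  qed
  show ?thesis
  proof (intro bexI allI impI)
    show "?pt q \<in> cube N"
      using q by (intro grid_point_in_cube[OF p]) (simp add: less_imp_le)
    fix i assume i: "i < N"
    obtain r s where r: "\<forall>j<N. q j \<le> r j \<and> r j \<le> q j + 1" and s: "\<forall>j<N. q j \<le> s j \<and> s j \<le> q j + 1"
      and rs: "label r i \<noteq> label s i"
      using q_cell i by blast
    have "label r i = 0 \<and> label s i = 1 \<or> label r i = 1 \<and> label s i = 0"
      using rs l(1)[of "?pt r" i] l(1)[of "?pt s" i] by (auto simp: label_def le_Suc_eq)
    then show "(\<exists>a\<in>cube N. (\<forall>j. \<bar>a j - ?pt q j\<bar> \<le> 1 / real p) \<and> a i \<le> f a i) \<and>
      (\<exists>b\<in>cube N. (\<forall>j. \<bar>b j - ?pt q j\<bar> \<le> 1 / real p) \<and> f b i \<le> b i)"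
      using cell[OF r] cell[OF s] l(4,5)[OF _ i] unfolding label_def by blast
  qed
qed

theorem brouwer_fun_cube:
  fixes f :: "(nat \<Rightarrow> real) \<Rightarrow> nat \<Rightarrow> real"
  assumes cont: "continuous_on (cube N) f" and maps: "f ` cube N \<subseteq> cube N"
  shows "\<exists>x\<in>cube N. f x = x"
proof -
  define A where "A i = {x \<in> cube N. x i \<le> f x i}" for i
  define B where "B i = {x \<in> cube N. f x i \<le> x i}" for i
  have closed: "closed (A i)" "closed (B i)" for i
    unfolding A_def B_def
    using continuous_on_product_then_coordinatewise[OF cont, of i]
      continuous_on_product_then_coordinatewise[OF continuous_on_id, of "cube N" i]
    by (auto intro: closed_cube_le)
  have "\<exists>z\<in>cube N. \<forall>i<N. (\<exists>a\<in>A i. \<forall>j. \<bar>a j - z j\<bar> \<le> 1 / real (Suc k)) \<and>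
      (\<exists>b\<in>B i. \<forall>j. \<bar>b j - z j\<bar> \<le> 1 / real (Suc k))" for k
    using cube_approx_fixpoint[OF maps, of "Suc k"] unfolding A_def B_def by blast
  then obtain Z where Z: "\<And>k. Z k \<in> cube N"
    and Z_near: "\<And>k i. i < N \<Longrightarrow> (\<exists>a\<in>A i. \<forall>j. \<bar>a j - Z k j\<bar> \<le> 1 / real (Suc k)) \<and>
      (\<exists>b\<in>B i. \<forall>j. \<bar>b j - Z k j\<bar> \<le> 1 / real (Suc k))"
    by metis
  obtain l \<phi> where l: "l \<in> cube N" and \<phi>: "strict_mono \<phi>" and lim: "(Z \<circ> \<phi>) \<longlonglongrightarrow> l"
    using compact_imp_seq_compact[OF compact_cube] Z unfolding seq_compact_def by blast
  have "f l i = l i" for i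
  proof (cases "i < N")
    case True
    then have "l \<in> A i" "l \<in> B i"
      using limit_in_closed_if_near[OF closed(1) lim \<phi>] limit_in_closed_if_near[OF closed(2) lim \<phi>]
        Z_near by blast+
    then show ?thesis
      unfolding A_def B_def by simp
  next
    case False
    have "f l \<in> cube N"
      using l maps by blast
    with False l show ?thesis
      by (simp add: cube_def)
  qed
  then show ?thesis
    using l by auto
qed

section \<open>Existence of Nash equilibria\<close>

lemma finite_positions: "finite (positions n s)"
  unfolding positions_def by (simp add: finite_PiE)

lemma positions_less: "v \<in> positions n s \<Longrightarrow> i < n \<Longrightarrow> v i < s i"
  unfolding positions_def by (auto simp: PiE_iff)

lemma profile_outside:
  assumes "profile n s \<sigma>" "\<not> (i < n \<and> a < s i)"
  shows "\<sigma> i a = 0"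
  using assms by (cases "i < n") (auto simp: profile_def mixed_strategy_def)

lemma mixed_strategy_le_1:
  assumes "mixed_strategy m p"
  shows "p a \<le> 1"
proof (cases "a < m")
  case True
  then have "p a \<le> (\<Sum>b<m. p b)"
    using assms by (intro member_le_sum) (auto simp: mixed_strategy_def)
  then show ?thesis
    using assms by (simp add: mixed_strategy_def)
qed (use assms in \<open>simp add: mixed_strategy_def\<close>)

lemma mixed_strategy_average_le:
  assumes "mixed_strategy m p" and "\<And>b. b < m \<Longrightarrow> U b \<le> u"
  shows "(\<Sum>b<m. p b * U b) \<le> u"
proof -
  have "(\<Sum>b<m. p b * U b) \<le> (\<Sum>b<m. p b * u)"
    using assms by (intro sum_mono mult_left_mono) (auto simp: mixed_strategy_def)
  also have "\<dots> = u"
    using assms by (simp add: mixed_strategy_def sum_distrib_right[symmetric])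
  finally show ?thesis .
qed

lemma mixed_strategy_support_below_average:
  assumes p: "mixed_strategy m p"
  shows "\<exists>a<m. 0 < p a \<and> U a \<le> (\<Sum>b<m. p b * U b)"
proof (rule ccontr)
  let ?u = "\<Sum>b<m. p b * U b"
  assume "\<not> ?thesis"
  then have above: "?u < U a" if "a < m" "0 < p a" for a
    using that by auto
  have p_nonneg: "0 \<le> p a" for a
    using p by (simp add: mixed_strategy_def)
  have terms_nonneg: "0 \<le> p a * (U a - ?u)" if "a < m" for a
    using above[OF that] p_nonneg[of a] by (cases "p a = 0") auto
  have "(\<Sum>a<m. p a * (U a - ?u)) = ?u - (\<Sum>a<m. p a) * ?u"
    by (simp add: algebra_simps sum_subtractf sum_distrib_right)
  also have "\<dots> = 0"
    using p by (simp add: mixed_strategy_def)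
  finally have zero: "\<forall>a\<in>{..<m}. p a * (U a - ?u) = 0"
    using terms_nonneg by (subst (asm) sum_nonneg_eq_0_iff) auto
  have "p a = 0" if "a < m" for a
  proof (rule ccontr)
    assume "p a \<noteq> 0"
    then have "0 < p a * (U a - ?u)"
      using above[OF that] p_nonneg[of a] by simp
    then show False
      using zero that by simp
  qed
  then show False
    using p by (simp add: mixed_strategy_def)
qed

definition pure_payoff :: "nat \<Rightarrow> (nat \<Rightarrow> nat) \<Rightarrow> ((nat \<Rightarrow> nat) \<Rightarrow> nat \<Rightarrow> real)
    \<Rightarrow> (nat \<Rightarrow> nat \<Rightarrow> real) \<Rightarrow> nat \<Rightarrow> nat \<Rightarrow> real" where
  "pure_payoff n s P \<sigma> i b =
     (\<Sum>v | v \<in> positions n s \<and> v i = b. (\<Prod>j\<in>{..<n} - {i}. \<sigma> j (v j)) * P v i)"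

lemma exp_payoff_deviation:
  assumes i: "i < n"
  shows "exp_payoff n s P (\<sigma>(i := \<tau>)) i = (\<Sum>b<s i. \<tau> b * pure_payoff n s P \<sigma> i b)"
proof -
  define w where "w v = (\<Prod>j\<in>{..<n} - {i}. \<sigma> j (v j)) * P v i" for v
  have "(\<Prod>j<n. (\<sigma>(i := \<tau>)) j (v j)) = \<tau> (v i) * (\<Prod>j\<in>{..<n} - {i}. \<sigma> j (v j))" for v
  proof -
    have "(\<Prod>j\<in>{..<n} - {i}. (\<sigma>(i := \<tau>)) j (v j)) = (\<Prod>j\<in>{..<n} - {i}. \<sigma> j (v j))"
      by (rule prod.cong) auto
    then show ?thesis
      using prod.remove[of "{..<n}" i "\<lambda>j. (\<sigma>(i := \<tau>)) j (v j)"] i by simp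
  qed
  then have "exp_payoff n s P (\<sigma>(i := \<tau>)) i = (\<Sum>v\<in>positions n s. \<tau> (v i) * w v)"
    unfolding exp_payoff_def w_def by (simp add: mult.assoc)
  also have "\<dots> = (\<Sum>v\<in>positions n s. \<Sum>b<s i. if v i = b then \<tau> b * w v else 0)"
    by (rule sum.cong[OF refl]) (simp add: positions_less[OF _ i])
  also have "\<dots> = (\<Sum>b<s i. \<Sum>v\<in>positions n s. if v i = b then \<tau> b * w v else 0)"
    by (rule sum.swap)
  also have "\<dots> = (\<Sum>b<s i. \<tau> b * pure_payoff n s P \<sigma> i b)"
    unfolding pure_payoff_def w_def sum_distrib_left
    by (simp add: sum.inter_filter[OF finite_positions])
  finally show ?thesis .
qed

lemma exp_payoff_eq_sum_pure_payoff:
  "i < n \<Longrightarrow> exp_payoff n s P \<sigma> i = (\<Sum>b<s i. \<sigma> i b * pure_payoff n s P \<sigma> i b)"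
  using exp_payoff_deviation[of i n s P \<sigma> "\<sigma> i"] by simp

text \<open>The map from Nash's 1951 existence proof of equilibria.\<close>

definition gain :: "nat \<Rightarrow> (nat \<Rightarrow> nat) \<Rightarrow> ((nat \<Rightarrow> nat) \<Rightarrow> nat \<Rightarrow> real)
    \<Rightarrow> (nat \<Rightarrow> nat \<Rightarrow> real) \<Rightarrow> nat \<Rightarrow> nat \<Rightarrow> real" where
  "gain n s P \<sigma> i b = max 0 (pure_payoff n s P \<sigma> i b - exp_payoff n s P \<sigma> i)"

definition nash_map :: "nat \<Rightarrow> (nat \<Rightarrow> nat) \<Rightarrow> ((nat \<Rightarrow> nat) \<Rightarrow> nat \<Rightarrow> real)
    \<Rightarrow> (nat \<Rightarrow> nat \<Rightarrow> real) \<Rightarrow> nat \<Rightarrow> nat \<Rightarrow> real" where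
  "nash_map n s P \<sigma> = (\<lambda>i a. if i < n \<and> a < s i
     then (\<sigma> i a + gain n s P \<sigma> i a) / (1 + (\<Sum>b<s i. gain n s P \<sigma> i b)) else 0)"

lemma gain_nonneg: "0 \<le> gain n s P \<sigma> i b"
  by (simp add: gain_def)

lemma sum_gain_nonneg: "0 \<le> (\<Sum>b<m. gain n s P \<sigma> i b)"
  by (simp add: sum_nonneg gain_nonneg)

lemma profile_nash_map:
  assumes "profile n s \<sigma>"
  shows "profile n s (nash_map n s P \<sigma>)"
  unfolding profile_def
proof (intro conjI allI impI)
  fix i assume i: "i < n"
  define G where "G = (\<Sum>b<s i. gain n s P \<sigma> i b)"
  have \<sigma>i: "mixed_strategy (s i) (\<sigma> i)"
    using assms i by (simp add: profile_def)
  have "(\<Sum>a<s i. nash_map n s P \<sigma> i a) = (\<Sum>a<s i. \<sigma> i a + gain n s P \<sigma> i a) / (1 + G)"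
    using i by (simp add: nash_map_def G_def sum_divide_distrib)
  also have "\<dots> = 1"
    using \<sigma>i sum_gain_nonneg[of n s P \<sigma> i "s i"]
    by (simp add: sum.distrib mixed_strategy_def G_def)
  finally show "mixed_strategy (s i) (nash_map n s P \<sigma> i)"
    using \<sigma>i sum_gain_nonneg[of n s P \<sigma> i "s i"]
    by (auto simp: mixed_strategy_def nash_map_def gain_nonneg)
qed (simp add: nash_map_def fun_eq_iff)

lemma continuous_on_nash_map:
  assumes "\<And>j b. continuous_on S (\<lambda>x. F x j b)"
  shows "continuous_on S (\<lambda>x. nash_map n s P (F x) i a)"
proof (cases "i < n \<and> a < s i")
  case True
  have "1 + (\<Sum>b<s i. gain n s P (F x) i b) \<noteq> 0" for x
    using sum_gain_nonneg[of n s P "F x" i "s i"] by linarith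
  with True show ?thesis
    unfolding nash_map_def gain_def pure_payoff_def exp_payoff_def
    by (simp, intro continuous_intros assms) (simp add: gain_def pure_payoff_def exp_payoff_def)
qed (auto simp: nash_map_def)

lemma nash_if_fixpoint_nash_map:
  assumes prof: "profile n s \<sigma>" and fixpoint: "nash_map n s P \<sigma> = \<sigma>"
  shows "nash n s P \<sigma>"
  unfolding nash_def
proof (intro conjI prof allI impI)
  fix i \<tau> assume i: "i < n" and \<tau>: "mixed_strategy (s i) \<tau>"
  define u where "u = exp_payoff n s P \<sigma> i"
  define U where "U b = pure_payoff n s P \<sigma> i b" for b
  define G where "G = (\<Sum>b<s i. gain n s P \<sigma> i b)"
  have \<sigma>i: "mixed_strategy (s i) (\<sigma> i)"
    using prof i by (simp add: profile_def)
  have u: "u = (\<Sum>b<s i. \<sigma> i b * U b)"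
    unfolding u_def U_def by (rule exp_payoff_eq_sum_pure_payoff[OF i])
  obtain a where a: "a < s i" "0 < \<sigma> i a" "U a \<le> u"
    using mixed_strategy_support_below_average[OF \<sigma>i, of U] u by blast
  \<comment> \<open>a strategy played with positive probability and without gain forces all gains to vanish\<close>
  have "gain n s P \<sigma> i a = 0"
    using a(3) by (simp add: gain_def U_def u_def)
  then have "\<sigma> i a / (1 + G) = \<sigma> i a"
    using fun_cong[OF fun_cong[OF fixpoint, of i], of a] i a(1)
    by (simp add: nash_map_def G_def)
  moreover have "0 \<le> G"
    unfolding G_def by (rule sum_gain_nonneg)
  ultimately have "\<sigma> i a * G = 0"
    by (simp add: divide_eq_eq algebra_simps)
  then have "G = 0"
    using a(2) by simp
  then have no_gain: "gain n s P \<sigma> i b = 0" if "b < s i" for b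
    using that unfolding G_def by (subst (asm) sum_nonneg_eq_0_iff) (auto simp: gain_nonneg)
  have "U b \<le> u" if "b < s i" for b
    using no_gain[OF that] by (simp add: gain_def U_def u_def max_def split: if_splits)
  then have "(\<Sum>b<s i. \<tau> b * U b) \<le> u"
    by (rule mixed_strategy_average_le[OF \<tau>])
  then show "exp_payoff n s P (\<sigma>(i := \<tau>)) i \<le> exp_payoff n s P \<sigma> i"
    by (simp add: exp_payoff_deviation[OF i] U_def u_def)
qed

lemma one_le_add_mult_max_diff:
  fixes S :: real
  assumes "1 \<le> k"
  shows "1 \<le> S + real k * max 0 (1 - S)"
proof (cases "S \<le> 1")
  case True
  then have "1 - S \<le> real k * (1 - S)"
    using assms by (simp add: mult_le_cancel_right1)
  then show ?thesis
    using True by simp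
qed simp

text \<open>Strategy \<open>a\<close> of player \<open>i\<close> is stored at coordinate \<open>i * m + a\<close> of the cube.
  A block of total weight \<open>S < 1\<close> is first topped up uniformly by \<open>1 - S\<close>: this keeps
  the map continuous on the whole cube and makes it the identity on blocks of weight 1.\<close>

definition block_profile :: "nat \<Rightarrow> (nat \<Rightarrow> nat) \<Rightarrow> nat \<Rightarrow> (nat \<Rightarrow> real) \<Rightarrow> nat \<Rightarrow> nat \<Rightarrow> real" where
  "block_profile n s m x = (\<lambda>i a. if i < n \<and> a < s i then
     (x (i * m + a) + max 0 (1 - (\<Sum>b<s i. x (i * m + b))))
     / ((\<Sum>b<s i. x (i * m + b)) + real (s i) * max 0 (1 - (\<Sum>b<s i. x (i * m + b))))
     else 0)"

lemma profile_block_profile: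
  assumes x: "\<And>j. 0 \<le> x j" and s: "\<forall>i<n. 1 \<le> s i"
  shows "profile n s (block_profile n s m x)"
  unfolding profile_def mixed_strategy_def
proof (intro conjI allI impI)
  fix i assume i: "i < n"
  define S where "S = (\<Sum>b<s i. x (i * m + b))"
  define t where "t = max 0 (1 - S)"
  have D: "1 \<le> S + real (s i) * t"
    unfolding t_def using one_le_add_mult_max_diff s i by simp
  show "0 \<le> block_profile n s m x i a" for a
  proof -
    have "0 \<le> (x (i * m + a) + t) / (S + real (s i) * t)"
      using x D by (intro divide_nonneg_pos add_nonneg_nonneg) (auto simp: t_def)
    then show ?thesis
      by (simp add: block_profile_def S_def t_def)
  qed
  show "block_profile n s m x i a = 0" if "s i \<le> a" for a
    using that by (simp add: block_profile_def)
  have "(\<Sum>a<s i. block_profile n s m x i a) = (\<Sum>a<s i. x (i * m + a) + t) / (S + real (s i) * t)"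
    using i by (simp add: block_profile_def S_def t_def sum_divide_distrib)
  then show "(\<Sum>a<s i. block_profile n s m x i a) = 1"
    using D by (simp add: sum.distrib S_def)
qed (simp_all add: block_profile_def fun_eq_iff)

lemma continuous_on_block_profile: "continuous_on S (\<lambda>x. block_profile n s m x i a)"
proof (cases "i < n \<and> a < s i")
  case True
  then have "(\<Sum>b<s i. x (i * m + b)) + real (s i) * max 0 (1 - (\<Sum>b<s i. x (i * m + b))) \<noteq> 0" for x
    using one_le_add_mult_max_diff[of "s i" "\<Sum>b<s i. x (i * m + b)"] by linarith
  with True show ?thesis
    unfolding block_profile_def
    by (simp, intro continuous_intros continuous_on_product_then_coordinatewise) simp
qed (auto simp: block_profile_def)

lemma block_profile_eq:
  assumes "i < n" "a < s i" "(\<Sum>b<s i. x (i * m + b)) = 1"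
  shows "block_profile n s m x i a = x (i * m + a)"
  using assms by (simp add: block_profile_def)

definition nash_cube_map :: "nat \<Rightarrow> (nat \<Rightarrow> nat) \<Rightarrow> ((nat \<Rightarrow> nat) \<Rightarrow> nat \<Rightarrow> real)
    \<Rightarrow> nat \<Rightarrow> (nat \<Rightarrow> real) \<Rightarrow> nat \<Rightarrow> real" where
  "nash_cube_map n s P m x j = (if j < n * m
     then nash_map n s P (block_profile n s m x) (j div m) (j mod m) else 0)"

lemma nash_cube_map_in_cube:
  assumes s: "\<forall>i<n. 1 \<le> s i" and x: "x \<in> cube (n * m)"
  shows "nash_cube_map n s P m x \<in> cube (n * m)"
proof -
  have "0 \<le> x j" for j
    using x by (cases "j < n * m") (auto simp: cube_def)
  then have prof: "profile n s (nash_map n s P (block_profile n s m x))"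
    by (intro profile_nash_map profile_block_profile s)
  have "0 \<le> nash_cube_map n s P m x j \<and> nash_cube_map n s P m x j \<le> 1" for j
  proof (cases "j < n * m \<and> j div m < n")
    case True
    then have "mixed_strategy (s (j div m)) (nash_map n s P (block_profile n s m x) (j div m))"
      using prof by (simp add: profile_def)
    then show ?thesis
      using True mixed_strategy_le_1 by (simp add: nash_cube_map_def mixed_strategy_def)
  next
    case False
    then show ?thesis
      using prof by (auto simp: nash_cube_map_def profile_def not_less)
  qed
  moreover have "nash_cube_map n s P m x j = 0" if "n * m \<le> j" for j
    using that by (simp add: nash_cube_map_def)
  ultimately show ?thesis
    by (simp add: cube_def)
qed

lemma continuous_on_nash_cube_map: "continuous_on S (nash_cube_map n s P m)"
proof (rule continuous_on_coordinatewise_then_product)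
  show "continuous_on S (\<lambda>x. nash_cube_map n s P m x j)" for j
    by (cases "j < n * m")
      (auto simp: nash_cube_map_def intro!: continuous_on_nash_map continuous_on_block_profile)
qed

theorem nash_equilibrium_exists:
  assumes s: "\<forall>i<n. 1 \<le> s i"
  shows "\<exists>\<sigma>. nash n s P \<sigma>"
proof -
  define m where "m = (\<Sum>i<n. s i)"
  have "nash_cube_map n s P m ` cube (n * m) \<subseteq> cube (n * m)"
    using nash_cube_map_in_cube[OF s] by blast
  then obtain z where z: "z \<in> cube (n * m)" and fixpoint: "nash_cube_map n s P m z = z"
    using brouwer_fun_cube[OF continuous_on_nash_cube_map] by blast
  define \<sigma> where "\<sigma> = block_profile n s m z"
  have z_nonneg: "0 \<le> z j" for j
    using z by (cases "j < n * m") (auto simp: cube_def)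
  have prof: "profile n s \<sigma>"
    unfolding \<sigma>_def by (rule profile_block_profile[OF z_nonneg s])
  have z_block: "z (i * m + a) = nash_map n s P \<sigma> i a" if i: "i < n" and a: "a < s i" for i a
  proof -
    have "s i \<le> m"
      unfolding m_def using i by (intro member_le_sum) auto
    then have am: "a < m"
      using a by simp
    have "i * m + a < (i + 1) * m"
      using am by simp
    also have "\<dots> \<le> n * m"
      using i by (intro mult_le_mono1) simp
    finally show ?thesis
      using fun_cong[OF fixpoint, of "i * m + a"] am by (simp add: nash_cube_map_def \<sigma>_def)
  qed
  have "nash_map n s P \<sigma> = \<sigma>"
  proof (intro ext)
    fix i a
    show "nash_map n s P \<sigma> i a = \<sigma> i a"
    proof (cases "i < n \<and> a < s i")
      case True
      have "(\<Sum>b<s i. z (i * m + b)) = (\<Sum>b<s i. nash_map n s P \<sigma> i b)"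
        using True z_block by simp
      also have "\<dots> = 1"
        using profile_nash_map[OF prof] True by (simp add: profile_def mixed_strategy_def)
      finally show ?thesis
        using True z_block by (simp add: \<sigma>_def block_profile_eq)
    next
      case False
      show ?thesis
        using False profile_outside[OF prof False] by (auto simp: nash_map_def)
    qed
  qed
  then show ?thesis
    using nash_if_fixpoint_nash_map[OF prof] by blast
qed

section \<open>The adaptation procedure\<close>

lemma ADn_Suc: "ADn n s (Suc t) M = AD n s (ADn n s t M)"
  by (induction t arbitrary: M) auto

declare ADn.simps(2) [simp del]

lemma AD_mono: "M \<subseteq> M' \<Longrightarrow> AD n s M \<subseteq> AD n s M'"
  unfolding AD_def by blast

lemma AD_eq_Image: "AD n s M = {(g, h). adapt_edge n s g h} `` M"
  unfolding AD_def adapt_edge_def by blast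

lemma ADn_eq_relpow_Image: "ADn n s t M = ({(g, h). adapt_edge n s g h} ^^ t) `` M"
  by (induction t) (simp_all add: ADn_Suc AD_eq_Image relcomp_Image)

lemma chi_subset_positions: "chi n s \<sigma> \<subseteq> positions n s"
  unfolding chi_def positions_def supp_def by (rule PiE_mono) auto

lemma chi_nonempty:
  assumes "profile n s \<sigma>"
  shows "chi n s \<sigma> \<noteq> {}"
proof -
  have "supp (s i) (\<sigma> i) \<noteq> {}" if i: "i < n" for i
  proof
    assume "supp (s i) (\<sigma> i) = {}"
    then have "(\<Sum>a<s i. \<sigma> i a) = 0"
      by (auto simp: supp_def)
    then show False
      using assms i by (simp add: profile_def mixed_strategy_def)
  qed
  then show ?thesis
    unfolding chi_def by (simp add: PiE_eq_empty_iff)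
qed

lemma NME_nonempty:
  assumes "\<forall>i<n. 1 \<le> s i"
  shows "NME n s g \<noteq> {}"
proof -
  have "\<exists>\<tau>. \<forall>i. i < n \<longrightarrow> nash n s (g (Suc i)) (\<tau> i)"
    using nash_equilibrium_exists[OF assms] by (intro choice) blast
  then obtain \<tau> where \<tau>: "\<forall>i. i < n \<longrightarrow> nash n s (g (Suc i)) (\<tau> i)"
    by blast
  define \<sigma> where "\<sigma> i = (if i < n then \<tau> i i else (\<lambda>_. 0))" for i
  have "profile n s \<sigma>"
    using \<tau> by (auto simp: \<sigma>_def nash_def profile_def)
  moreover have "\<forall>i<n. \<exists>\<tau>. nash n s (g (Suc i)) \<tau> \<and> \<sigma> i = \<tau> i"
    using \<tau> by (auto simp: \<sigma>_def)
  ultimately show ?thesis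
    unfolding NME_def by blast
qed

lemma upd_upd_same: "upd n (upd n g u) u = upd n g u"
  by (intro ext) (simp add: upd_def)

lemma upd_upd_fixed:
  assumes "upd n g v = g" "v \<noteq> u"
  shows "upd n (upd n g u) v = upd n g u"
proof -
  have adapted: "g k v j = g 0 v j" if "1 \<le> k" "k \<le> n" for k j
    using fun_cong[OF fun_cong[OF fun_cong[OF assms(1), of k], of v], of j] that
    by (simp add: upd_def)
  show ?thesis
  proof (intro ext)
    fix k w j
    show "upd n (upd n g u) v k w j = upd n g u k w j"
      using adapted assms(2) by (simp add: upd_def)
  qed
qed

definition unadapted :: "nat \<Rightarrow> (nat \<Rightarrow> nat) \<Rightarrow> mgame \<Rightarrow> (nat \<Rightarrow> nat) set" where
  "unadapted n s g = {v \<in> positions n s. upd n g v \<noteq> g}"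

lemma card_unadapted_le: "card (unadapted n s g) \<le> card (positions n s)"
  unfolding unadapted_def by (intro card_mono finite_positions) auto

lemma card_unadapted_upd_less:
  assumes "u \<in> positions n s" "upd n g u \<noteq> g"
  shows "card (unadapted n s (upd n g u)) < card (unadapted n s g)"
proof (rule psubset_card_mono)
  show "finite (unadapted n s g)"
    unfolding unadapted_def using finite_positions by simp
  have "unadapted n s (upd n g u) \<subseteq> unadapted n s g - {u}"
    unfolding unadapted_def using upd_upd_same[of n g u] upd_upd_fixed[of n g _ u] by auto
  also have "\<dots> \<subset> unadapted n s g"
    using assms by (auto simp: unadapted_def)
  finally show "unadapted n s (upd n g u) \<subset> unadapted n s g" .
qed

lemma adapt_edge_card_unadapted_less:
  "adapt_edge n s g h \<Longrightarrow> h \<noteq> g \<Longrightarrow> card (unadapted n s h) < card (unadapted n s g)"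
  unfolding adapt_edge_def using card_unadapted_upd_less chi_subset_positions by blast

text \<open>A walk of length exceeding \<open>f x\<close> must contain a loop, which can be repeated or dropped.\<close>

lemma relpow_loop_shift:
  fixes f :: "'a \<Rightarrow> nat"
  assumes dec: "\<And>x y. (x, y) \<in> R \<Longrightarrow> y \<noteq> x \<Longrightarrow> f y < f x"
  shows "(x, y) \<in> R ^^ t \<Longrightarrow> f x < t \<Longrightarrow> (x, y) \<in> R ^^ Suc t \<and> (x, y) \<in> R ^^ (t - 1)"
proof (induction t arbitrary: x)
  case 0
  then show ?case by simp
next
  case (Suc t)
  obtain z where xz: "(x, z) \<in> R" and zy: "(z, y) \<in> R ^^ t"
    using relpow_Suc_D2[OF Suc.prems(1)] by blast
  show ?case
  proof (cases "z = x")
    case True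
    then show ?thesis
      using relpow_Suc_I2[OF xz[unfolded True] Suc.prems(1)] zy by simp
  next
    case False
    then have "f z < t"
      using dec[OF xz] Suc.prems(2) by simp
    then have "(z, y) \<in> R ^^ Suc t" "(z, y) \<in> R ^^ (t - 1)" "Suc (t - 1) = t"
      using Suc.IH[OF zy] by auto
    then show ?thesis
      using relpow_Suc_I2[OF xz, of y "Suc t"] relpow_Suc_I2[OF xz, of y "t - 1"] by simp
  qed
qed

lemma ADn_stationary:
  assumes "card (positions n s) < T"
  shows "ADn n s (Suc T) M = ADn n s T M"
proof -
  let ?R = "{(g, h). adapt_edge n s g h}" and ?f = "\<lambda>g. card (unadapted n s g)"
  have dec: "?f h < ?f g" if "(g, h) \<in> ?R" "h \<noteq> g" for g h
    using adapt_edge_card_unadapted_less that by simp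
  have short: "?f x < T" for x
    using card_unadapted_le[of n s x] assms by simp
  have "(x, y) \<in> ?R ^^ Suc T \<longleftrightarrow> (x, y) \<in> ?R ^^ T" for x y
    using relpow_loop_shift[of ?R ?f, OF dec, of x y T] relpow_loop_shift[of ?R ?f, OF dec, of x y "Suc T"]
      short[of x] less_SucI by auto
  then show ?thesis
    unfolding ADn_eq_relpow_Image by blast
qed

lemma ADn_ADlength_add: "ADn n s (ADlength n s M + k) M = ADinf n s M"
proof (induction k)
  case 0
  then show ?case by (simp add: ADinf_def)
next
  case (Suc k)
  have "ADn n s (Suc (ADlength n s M)) M = ADn n s (ADlength n s M) M"
    unfolding ADlength_def by (rule LeastI_ex) (use ADn_stationary in blast)
  with Suc show ?case
    by (simp add: ADn_Suc ADinf_def)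
qed

lemma terminal_set_subset_ADinf: "terminal_set n s mG \<subseteq> ADinf n s {mG}"
proof
  fix g assume "g \<in> terminal_set n s mG"
  then obtain t where t: "g \<in> ADn n s t {mG}" and loop: "g \<in> AD n s {g}"
    by (auto simp: terminal_set_def ADstar_def)
  have "g \<in> ADn n s (t + k) {mG}" for k
  proof (induction k)
    case (Suc k)
    then have "AD n s {g} \<subseteq> AD n s (ADn n s (t + k) {mG})"
      by (intro AD_mono) simp
    with loop show ?case
      by (auto simp: ADn_Suc)
  qed (use t in simp)
  from this[of "ADlength n s {mG}"] show "g \<in> ADinf n s {mG}"
    using ADn_ADlength_add by (simp add: add.commute)
qed

lemma sink_adapt_edge_loop:
  assumes g: "g \<in> sinks n s mG" and edge: "adapt_edge n s g h"
  shows "h = g"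
proof (rule ccontr)
  assume "h \<noteq> g"
  have "finite (out_nbrs' n s mG g)"
  proof (rule finite_subset)
    show "out_nbrs' n s mG g \<subseteq> upd n g ` positions n s"
      unfolding out_nbrs'_def adapt_edge_def using chi_subset_positions by blast
  qed (simp add: finite_positions)
  then have no_nbrs: "out_nbrs' n s mG g = {}"
    using g by (simp add: sinks_def out_degree'_def)
  obtain t where "g \<in> ADn n s t {mG}"
    using g by (auto simp: sinks_def ADstar_def)
  then have "h \<in> ADn n s (Suc t) {mG}"
    using edge by (auto simp: ADn_Suc AD_eq_Image)
  then have "h \<in> out_nbrs' n s mG g"
    using edge \<open>h \<noteq> g\<close> by (auto simp: out_nbrs'_def ADstar_def)
  with no_nbrs show False
    by simp
qed

lemma sinks_subset_terminal_set:
  assumes "\<forall>i<n. 1 \<le> s i"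
  shows "sinks n s mG \<subseteq> terminal_set n s mG"
proof
  fix g assume g: "g \<in> sinks n s mG"
  obtain \<sigma> where \<sigma>: "\<sigma> \<in> NME n s g"
    using NME_nonempty[OF assms] by blast
  then have "profile n s \<sigma>"
    by (simp add: NME_def)
  then obtain u where u: "u \<in> chi n s \<sigma>"
    using chi_nonempty by blast
  have "upd n g u = g"
    using sink_adapt_edge_loop[OF g] \<sigma> u by (auto simp: adapt_edge_def)
  then have "g \<in> AD n s {g}"
    using \<sigma> u unfolding AD_def by force
  with g show "g \<in> terminal_set n s mG"
    by (simp add: terminal_set_def sinks_def)
qed

theorem proposition19:
  fixes n :: nat and s :: "nat \<Rightarrow> nat" and mG :: mgame
  assumes "1 \<le> n"
    and "\<forall>i<n. 1 \<le> s i"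
  shows "sinks n s mG \<subseteq> terminal_set n s mG
    \<and> (\<forall>g\<in>sinks n s mG. \<forall>\<sigma>\<in>NME n s g. stable_eq n s mG \<sigma>)"
proof -
  have sinks_terminal: "sinks n s mG \<subseteq> terminal_set n s mG"
    by (rule sinks_subset_terminal_set[OF assms(2)])
  have "stable_eq n s mG \<sigma>" if g: "g \<in> sinks n s mG" and \<sigma>: "\<sigma> \<in> NME n s g" for g \<sigma>
  proof -
    have "g \<in> ADinf n s {mG}"
      using sinks_terminal terminal_set_subset_ADinf g by blast
    moreover have "upd n g v = g" if "v \<in> chi n s \<sigma>" for v
      using sink_adapt_edge_loop[OF g] \<sigma> that by (auto simp: adapt_edge_def)
    ultimately show ?thesis
      using \<sigma> unfolding stable_eq_def by blast
  qed
  with sinks_terminal show ?thesis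
    by blast
qed

end
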